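(* Fix $N\ge1$, let $\mathbf{F}$ be any one of $\mathbf{F}^{\rm Midpt},\mathbf{F}^{\rm Mass},\mathbf{F}^{\rm Eng}$ (defined in the context), and let $\mathbf{b}(t)$ be the solution of the toy model system with initial condition $\mathbf{b}(0)\in\mathbb{C}^N$. Then there is a constant $C$ depending only on $\|\mathbf{b}(0)\|_2$ such that, for a time step $\Delta t>0$ and $t_n=n\Delta t$, the local truncation error satisfies $$\|\mathbf{b}(t_{n+1})-\mathbf{b}(t_n)-\Delta t\,\mathbf{F}(\mathbf{b}(t_n),\mathbf{b}(t_{n+1}))\|\le C\,\Delta t^3 .$$
   Context: The toy model system is $-i\dot b_j=-|b_j|^2b_j+2b_{j-1}^2\bar b_j+2b_{j+1}^2\bar b_j$, $j=1,\dots,N$, with $b_0(t)=b_{N+1}(t)=0$. $\|\cdot\|=\|\cdot\|_2$ is the Euclidean norm on $\mathbb{C}^N$. For $\mathbf{u},\mathbf{v}\in\mathbb{C}^N$ set $u_0=u_{N+1}=v_0=v_{N+1}=0$, $m_j=\tfrac12(u_j+v_j)$, $a_j=\tfrac12(|u_j|^2+|v_j|^2)$, $q_j=\tfrac12(u_j^2+v_j^2)$, and for $j=1,\dots,N$: $F^{\rm Midpt}_j(\mathbf{u},\mathbf{v})=-i|m_j|^2m_j+2i\,\bar m_j(m_{j-1}^2+m_{j+1}^2)$; $F^{\rm Mass}_j(\mathbf{u},\mathbf{v})=-i\,a_jm_j+2i\,\bar m_j(m_{j+1}^2+m_{j-1}^2)$; $F^{\rm Eng}_j(\mathbf{u},\mathbf{v})=-i\,a_jm_j+2i\,\bar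 m_j(q_{j+1}+q_{j-1})$. The corresponding numerical schemes are $\mathbf{b}_{n+1}=\mathbf{b}_n+\Delta t\,\mathbf{F}(\mathbf{b}_n,\mathbf{b}_{n+1})$. *)

theory Defs
  imports "HOL-Analysis.Analysis"
begin

text \<open>Vectors in C^N are represented as functions nat => complex, with the
  relevant components indexed 1..N. The helper ext extends a vector by zero
  outside 1..N (so that u_0 = u_{N+1} = 0).\<close>

definition ext :: "nat \<Rightarrow> (nat \<Rightarrow> complex) \<Rightarrow> nat \<Rightarrow> complex" where
  "ext N u j = (if 1 \<le> j \<and> j \<le> N then u j else 0)"

definition vnorm :: "nat \<Rightarrow> (nat \<Rightarrow> complex) \<Rightarrow> real" where
  "vnorm N u = sqrt (\<Sum>j=1..N. (cmod (u j))\<^sup>2)"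

text \<open>Right-hand side of the toy model written as  d/dt b_j = i * (...),
  since  -i b_j' = R_j  is equivalent to  b_j' = i R_j.\<close>
definition toy_rhs :: "nat \<Rightarrow> (nat \<Rightarrow> complex) \<Rightarrow> nat \<Rightarrow> complex" where
  "toy_rhs N b j = (let c = ext N b in
      \<i> * (- ((cmod (c j))\<^sup>2) * c j + 2 * (c (j - 1))\<^sup>2 * cnj (c j)
            + 2 * (c (j + 1))\<^sup>2 * cnj (c j)))"

definition m_av :: "nat \<Rightarrow> (nat \<Rightarrow> complex) \<Rightarrow> (nat \<Rightarrow> complex) \<Rightarrow> nat \<Rightarrow> complex" where
  "m_av N u v j = (ext N u j + ext N v j) / 2"

definition a_av :: "nat \<Rightarrow> (nat \<Rightarrow> complex) \<Rightarrow> (nat \<Rightarrow> complex) \<Rightarrow> nat \<Rightarrow> complex" where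
  "a_av N u v j = complex_of_real (((cmod (ext N u j))\<^sup>2 + (cmod (ext N v j))\<^sup>2) / 2)"

definition q_av :: "nat \<Rightarrow> (nat \<Rightarrow> complex) \<Rightarrow> (nat \<Rightarrow> complex) \<Rightarrow> nat \<Rightarrow> complex" where
  "q_av N u v j = ((ext N u j)\<^sup>2 + (ext N v j)\<^sup>2) / 2"

definition F_Midpt :: "nat \<Rightarrow> (nat \<Rightarrow> complex) \<Rightarrow> (nat \<Rightarrow> complex) \<Rightarrow> nat \<Rightarrow> complex" where
  "F_Midpt N u v j = (let m = m_av N u v in
      - \<i> * complex_of_real ((cmod (m j))\<^sup>2) * m j
      + 2 * \<i> * cnj (m j) * ((m (j - 1))\<^sup>2 + (m (j + 1))\<^sup>2))"

definition F_Mass :: "nat \<Rightarrow> (nat \<Rightarrow> complex) \<Rightarrow> (nat \<Rightarrow> complex) \<Rightarrow> nat \<Rightarrow> complex" where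
  "F_Mass N u v j = (let m = m_av N u v in
      - \<i> * a_av N u v j * m j
      + 2 * \<i> * cnj (m j) * ((m (j + 1))\<^sup>2 + (m (j - 1))\<^sup>2))"

definition F_Eng :: "nat \<Rightarrow> (nat \<Rightarrow> complex) \<Rightarrow> (nat \<Rightarrow> complex) \<Rightarrow> nat \<Rightarrow> complex" where
  "F_Eng N u v j = (let m = m_av N u v; q = q_av N u v in
      - \<i> * a_av N u v j * m j
      + 2 * \<i> * cnj (m j) * (q (j + 1) + q (j - 1)))"

text \<open>b is a solution of the toy model on [0,inf) in C^N (components outside
  1..N are identically zero, encoding b_0 = b_{N+1} = 0).\<close>
definition is_toy_solution :: "nat \<Rightarrow> (real \<Rightarrow> nat \<Rightarrow> complex) \<Rightarrow> bool" where
  "is_toy_solution N b \<longleftrightarrow>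
     (\<forall>t \<ge> 0. \<forall>j. \<not> (1 \<le> j \<and> j \<le> N) \<longrightarrow> b t j = 0) \<and>
     (\<forall>t \<ge> 0. \<forall>j \<in> {1..N}.
        ((\<lambda>s. b s j) has_vector_derivative toy_rhs N (b t) j) (at t within {0..}))"

end

theory Submission
  imports Defs
begin

text \<open>
  Mass conservation bounds every component by \<open>M = \<parallel>b(0)\<parallel>\<close>. On a window \<open>[t\<^sub>0, t\<^sub>0 + h]\<close> with
  \<open>h \<lesssim> 1/M\<^sup>2\<close> a continuity argument gives \<open>|b\<^sub>k| \<le> 2|b\<^sub>k(t\<^sub>0)|\<close>; since the nonlinearity at site
  \<open>k\<close> carries the factor \<open>b\<^sub>k\<close>, every Taylor-type estimate for component \<open>k\<close> is then
  proportional to \<open>|b\<^sub>k(t\<^sub>0)|\<close>, and summing in \<open>\<ell>\<^sup>2\<close> gives bounds independent of \<open>N\<close>.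
  The midpoint rule has local error \<open>O(h\<^sup>3)\<close>: the midpoint quadrature error of \<open>b'\<close> and the
  difference between \<open>b(t\<^sub>0 + h/2)\<close> and the averaged state are both of second order in \<open>h\<close>.
  The mass- and energy-conserving schemes differ from the midpoint rule by terms quadratic in
  the step \<open>b(t\<^sub>0 + h) - b(t\<^sub>0)\<close>. Longer steps are covered by the crude bound
  \<open>(1 + 5M\<^sup>2h) 2M\<close>.
\<close>

lemma norm_mult3_le:
  fixes x y z :: "'a::real_normed_field" and X Y Z :: real
  assumes "norm x \<le> X" "norm y \<le> Y" "norm z \<le> Z"
  shows "norm (x * y * z) \<le> X * Y * Z"
proof -
  have "0 \<le> X" "0 \<le> Y" using assms(1,2) norm_ge_zero order_trans by blast+
  then have "norm x * norm y \<le> X * Y" using assms(1,2) by (simp add: mult_mono')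
  then show ?thesis using assms(3) \<open>0 \<le> X\<close> \<open>0 \<le> Y\<close> by (simp add: norm_mult mult_mono')
qed

lemma norm_mult3_perturb_le:
  fixes x y z a b c :: "'a::real_normed_field" and X Y Z B \<tau> :: real
  assumes "norm x \<le> X" "norm y \<le> Y" "norm z \<le> Z"
    and "norm a \<le> \<tau> * B * X" "norm b \<le> \<tau> * B * Y" "norm c \<le> \<tau> * B * Z"
    and "0 \<le> \<tau>" "\<tau> \<le> 1" "1 \<le> B"
  shows "norm ((x + a) * (y + b) * (z + c) - x * y * z) \<le> 7 * B^3 * \<tau> * (X * Y * Z)"
proof -
  have "0 \<le> X" "0 \<le> Y" "0 \<le> Z" using assms(1-3) norm_ge_zero order_trans by blast+
  then have XYZ: "0 \<le> X * Y * Z" by simp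
  have expand: "(x + a) * (y + b) * (z + c) - x * y * z
      = a*y*z + x*b*z + x*y*c + a*b*z + a*y*c + x*b*c + a*b*c"
    by (simp add: algebra_simps)
  have "norm ((x + a) * (y + b) * (z + c) - x * y * z)
      \<le> (\<tau>*B*X)*Y*Z + X*(\<tau>*B*Y)*Z + X*Y*(\<tau>*B*Z) + (\<tau>*B*X)*(\<tau>*B*Y)*Z
        + (\<tau>*B*X)*Y*(\<tau>*B*Z) + X*(\<tau>*B*Y)*(\<tau>*B*Z) + (\<tau>*B*X)*(\<tau>*B*Y)*(\<tau>*B*Z)"
    unfolding expand
    by (intro order_trans[OF norm_triangle_ineq] add_mono norm_mult3_le; simp add: assms)
  also have "\<dots> = (3*B + 3*B^2*\<tau> + B^3*\<tau>^2) * \<tau> * (X*Y*Z)"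
    by (simp add: algebra_simps power2_eq_square power3_eq_cube)
  also have "\<dots> \<le> 7 * B^3 * \<tau> * (X * Y * Z)"
  proof -
    have "1 \<le> B^2" "\<tau>^2 \<le> 1" using assms(7-9) by (simp_all add: one_le_power power_le_one)
    then have "B \<le> B^3" "B^2 * \<tau> \<le> B^2" "B^2 \<le> B^3" "B^3 * \<tau>^2 \<le> B^3"
      using assms(7-9) by (auto simp: power2_eq_square power3_eq_cube mult_left_le)
    then have "3*B + 3*B^2*\<tau> + B^3*\<tau>^2 \<le> 7*B^3" by linarith
    then show ?thesis using XYZ assms(7) by (intro mult_right_mono) simp_all
  qed
  finally show ?thesis .
qed

lemma norm_mult3_second_diff_le:
  fixes x y z a1 b1 c1 a2 b2 c2 :: "'a::real_normed_field" and X Y Z B \<tau> :: real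
  assumes "norm x \<le> X" "norm y \<le> Y" "norm z \<le> Z"
    and "norm a1 \<le> \<tau> * B * X" "norm b1 \<le> \<tau> * B * Y" "norm c1 \<le> \<tau> * B * Z"
    and "norm a2 \<le> \<tau> * B * X" "norm b2 \<le> \<tau> * B * Y" "norm c2 \<le> \<tau> * B * Z"
    and "norm (a1 + a2) \<le> \<tau>^2 * B * X" "norm (b1 + b2) \<le> \<tau>^2 * B * Y"
    and "norm (c1 + c2) \<le> \<tau>^2 * B * Z"
    and "0 \<le> \<tau>" "\<tau> \<le> 1" "1 \<le> B"
  shows "norm ((x + a1) * (y + b1) * (z + c1) + (x + a2) * (y + b2) * (z + c2) - 2 * (x * y * z))
     \<le> 11 * B^3 * \<tau>^2 * (X * Y * Z)"
proof -
  have "0 \<le> X" "0 \<le> Y" "0 \<le> Z" using assms(1-3) norm_ge_zero order_trans by blast+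
  then have XYZ: "0 \<le> X * Y * Z" by simp
  define a b c where "a = a1 + a2" and "b = b1 + b2" and "c = c1 + c2"
  have expand: "(x + a1) * (y + b1) * (z + c1) + (x + a2) * (y + b2) * (z + c2) - 2 * (x * y * z)
     = a*y*z + x*b*z + x*y*c + a1*b1*z + a1*y*c1 + x*b1*c1
       + a2*b2*z + a2*y*c2 + x*b2*c2 + a1*b1*c1 + a2*b2*c2"
    by (simp add: a_def b_def c_def algebra_simps)
  have "norm ((x + a1) * (y + b1) * (z + c1) + (x + a2) * (y + b2) * (z + c2) - 2 * (x * y * z))
     \<le> (\<tau>^2*B*X)*Y*Z + X*(\<tau>^2*B*Y)*Z + X*Y*(\<tau>^2*B*Z)
     + (\<tau>*B*X)*(\<tau>*B*Y)*Z + (\<tau>*B*X)*Y*(\<tau>*B*Z) + X*(\<tau>*B*Y)*(\<tau>*B*Z)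
     + (\<tau>*B*X)*(\<tau>*B*Y)*Z + (\<tau>*B*X)*Y*(\<tau>*B*Z) + X*(\<tau>*B*Y)*(\<tau>*B*Z)
     + (\<tau>*B*X)*(\<tau>*B*Y)*(\<tau>*B*Z) + (\<tau>*B*X)*(\<tau>*B*Y)*(\<tau>*B*Z)"
    unfolding expand
    by (intro order_trans[OF norm_triangle_ineq] add_mono norm_mult3_le;
        simp add: assms a_def b_def c_def)
  also have "\<dots> = (3*B + 6*B^2 + 2*B^3*\<tau>) * \<tau>^2 * (X*Y*Z)"
    by (simp add: algebra_simps power2_eq_square power3_eq_cube)
  also have "\<dots> \<le> 11 * B^3 * \<tau>^2 * (X * Y * Z)"
  proof -
    have "B \<le> B^2" "B^2 \<le> B^3" using assms(15) by (simp_all add: power2_eq_square power3_eq_cube)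
    moreover have "B^3 * \<tau> \<le> B^3" using assms(13-15) by (simp add: mult_left_le)
    ultimately have "3*B + 6*B^2 + 2*B^3*\<tau> \<le> 11*B^3" by linarith
    then show ?thesis using XYZ by (intro mult_right_mono) simp_all
  qed
  finally show ?thesis .
qed

lemma norm_diff_le_of_vector_derivative_bound:
  fixes f :: "real \<Rightarrow> 'a::real_normed_vector"
  assumes "a \<le> c"
    and "\<And>x. x \<in> {a..c} \<Longrightarrow> (f has_vector_derivative f' x) (at x within {a..c})"
    and "\<And>x. x \<in> {a..c} \<Longrightarrow> norm (f' x) \<le> K"
  shows "norm (f c - f a) \<le> K * (c - a)"
proof -
  have "norm (f c - f a) \<le> K * norm (c - a)"
  proof (rule differentiable_bound[of "{a..c}" f "\<lambda>x h. h *\<^sub>R f' x"])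
    show "(f has_derivative (\<lambda>h. h *\<^sub>R f' x)) (at x within {a..c})" if "x \<in> {a..c}" for x
      using assms(2)[OF that] by (simp add: has_vector_derivative_def)
    show "onorm (\<lambda>h. h *\<^sub>R f' x) \<le> K" if "x \<in> {a..c}" for x
      using assms(3)[OF that] by (simp add: onorm_scaleR_left[OF bounded_linear_ident] onorm_id)
  qed (use assms(1) in auto)
  then show ?thesis using assms(1) by simp
qed

section \<open>The cubic nonlinearity and the three schemes\<close>

definition toy_cubic :: "complex \<Rightarrow> complex \<Rightarrow> complex \<Rightarrow> complex" where
  "toy_cubic p c n = 2 * (p * p * cnj c) + 2 * (n * n * cnj c) - c * c * cnj c"

lemma toy_rhs_eq_toy_cubic:
  "toy_rhs N u j = \<i> * toy_cubic (ext N u (j - 1)) (ext N u j) (ext N u (j + 1))"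
  using complex_norm_square[of "ext N u j"]
  unfolding toy_rhs_def toy_cubic_def Let_def by (simp add: algebra_simps power2_eq_square)

lemma norm_toy_cubic_combination_le:
  fixes X Y Z :: complex
  assumes "norm X \<le> \<alpha> * (Ap * Ap * Ac)" "norm Y \<le> \<alpha> * (An * An * Ac)"
    "norm Z \<le> \<alpha> * (Ac * Ac * Ac)"
    and "0 \<le> \<alpha>" "0 \<le> Ap" "0 \<le> Ac" "0 \<le> An" "Ap \<le> D" "Ac \<le> D" "An \<le> D"
  shows "norm (2 * X + 2 * Y - Z) \<le> 5 * \<alpha> * D^2 * Ac"
proof -
  have "norm (2 * X + 2 * Y - Z) \<le> norm (2 * X + 2 * Y) + norm Z"
    by (rule norm_triangle_ineq4)
  also have "\<dots> \<le> 2 * norm X + 2 * norm Y + norm Z"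
    using norm_triangle_ineq[of "2 * X" "2 * Y"] by simp
  also have "\<dots> \<le> \<alpha> * Ac * (2 * (Ap * Ap) + 2 * (An * An) + Ac * Ac)"
    using assms(1-3) by (simp add: algebra_simps)
  also have "\<dots> \<le> \<alpha> * Ac * (5 * D^2)"
  proof (intro mult_left_mono)
    have "Ap * Ap \<le> D^2" "An * An \<le> D^2" "Ac * Ac \<le> D^2"
      using assms(5-10) by (simp_all add: power2_eq_square mult_mono)
    then show "2 * (Ap * Ap) + 2 * (An * An) + Ac * Ac \<le> 5 * D^2" by linarith
  qed (use assms(4,6) in simp)
  finally show ?thesis by (simp add: algebra_simps)
qed

lemma norm_toy_cubic_le:
  assumes "norm p \<le> m" "norm c \<le> m" "norm n \<le> m"
  shows "norm (toy_cubic p c n) \<le> 5 * m^2 * norm c"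
  unfolding toy_cubic_def
  by (rule norm_toy_cubic_combination_le[where \<alpha>=1 and Ap="norm p" and Ac="norm c" and An="norm n",
        simplified]) (simp_all add: assms norm_mult)

lemma norm_toy_cubic_perturb_le:
  fixes p c n dp dc dn :: complex
  assumes "norm p \<le> Ap" "norm c \<le> Ac" "norm n \<le> An"
    and "norm dp \<le> \<tau> * B * Ap" "norm dc \<le> \<tau> * B * Ac" "norm dn \<le> \<tau> * B * An"
    and "0 \<le> \<tau>" "\<tau> \<le> 1" "1 \<le> B" "Ap \<le> D" "Ac \<le> D" "An \<le> D"
  shows "norm (toy_cubic (p + dp) (c + dc) (n + dn) - toy_cubic p c n) \<le> 35 * B^3 * D^2 * \<tau> * Ac"
proof -
  have nonneg: "0 \<le> Ap" "0 \<le> Ac" "0 \<le> An" "0 \<le> B"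
    using assms(1-3,9) norm_ge_zero order_trans by (blast, blast, blast, simp)
  have "toy_cubic (p + dp) (c + dc) (n + dn) - toy_cubic p c n
      = 2 * ((p + dp) * (p + dp) * (cnj c + cnj dc) - p * p * cnj c)
      + 2 * ((n + dn) * (n + dn) * (cnj c + cnj dc) - n * n * cnj c)
      - ((c + dc) * (c + dc) * (cnj c + cnj dc) - c * c * cnj c)" (is "_ = ?sum")
    by (simp add: toy_cubic_def algebra_simps)
  moreover have "norm ?sum \<le> 5 * (7 * B^3 * \<tau>) * D^2 * Ac"
    by (intro norm_toy_cubic_combination_le[where Ap=Ap and Ac=Ac and An=An] norm_mult3_perturb_le)
       (simp_all add: assms nonneg)
  ultimately have "norm (toy_cubic (p + dp) (c + dc) (n + dn) - toy_cubic p c n)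
      \<le> 5 * (7 * B^3 * \<tau>) * D^2 * Ac"
    by (simp only:)
  then show ?thesis by (simp add: ac_simps)
qed

lemma norm_toy_cubic_second_diff_le:
  fixes p c n dp1 dc1 dn1 dp2 dc2 dn2 :: complex
  assumes "norm p \<le> Ap" "norm c \<le> Ac" "norm n \<le> An"
    and "norm dp1 \<le> \<tau> * B * Ap" "norm dc1 \<le> \<tau> * B * Ac" "norm dn1 \<le> \<tau> * B * An"
    and "norm dp2 \<le> \<tau> * B * Ap" "norm dc2 \<le> \<tau> * B * Ac" "norm dn2 \<le> \<tau> * B * An"
    and "norm (dp1 + dp2) \<le> \<tau>^2 * B * Ap" "norm (dc1 + dc2) \<le> \<tau>^2 * B * Ac"
    and "norm (dn1 + dn2) \<le> \<tau>^2 * B * An"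
    and "0 \<le> \<tau>" "\<tau> \<le> 1" "1 \<le> B" "Ap \<le> D" "Ac \<le> D" "An \<le> D"
  shows "norm (toy_cubic (p + dp1) (c + dc1) (n + dn1) + toy_cubic (p + dp2) (c + dc2) (n + dn2)
           - 2 * toy_cubic p c n) \<le> 55 * B^3 * D^2 * \<tau>^2 * Ac"
proof -
  have nonneg: "0 \<le> Ap" "0 \<le> Ac" "0 \<le> An" "0 \<le> B"
    using assms(1-3,15) norm_ge_zero order_trans by (blast, blast, blast, simp)
  have cnj_sum: "norm (cnj dc1 + cnj dc2) \<le> \<tau>^2 * B * Ac"
    by (metis assms(11) complex_cnj_add complex_mod_cnj)
  have "toy_cubic (p + dp1) (c + dc1) (n + dn1) + toy_cubic (p + dp2) (c + dc2) (n + dn2)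
        - 2 * toy_cubic p c n
      = 2 * ((p + dp1) * (p + dp1) * (cnj c + cnj dc1) + (p + dp2) * (p + dp2) * (cnj c + cnj dc2)
             - 2 * (p * p * cnj c))
      + 2 * ((n + dn1) * (n + dn1) * (cnj c + cnj dc1) + (n + dn2) * (n + dn2) * (cnj c + cnj dc2)
             - 2 * (n * n * cnj c))
      - ((c + dc1) * (c + dc1) * (cnj c + cnj dc1) + (c + dc2) * (c + dc2) * (cnj c + cnj dc2)
             - 2 * (c * c * cnj c))" (is "_ = ?sum")
    by (simp add: toy_cubic_def algebra_simps)
  moreover have "norm ?sum \<le> 5 * (11 * B^3 * \<tau>^2) * D^2 * Ac"
    by (intro norm_toy_cubic_combination_le[where Ap=Ap and Ac=Ac and An=An]
        norm_mult3_second_diff_le)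
       (simp_all add: assms cnj_sum nonneg)
  ultimately have "norm (toy_cubic (p + dp1) (c + dc1) (n + dn1)
      + toy_cubic (p + dp2) (c + dc2) (n + dn2) - 2 * toy_cubic p c n)
      \<le> 5 * (11 * B^3 * \<tau>^2) * D^2 * Ac"
    by (simp only:)
  then show ?thesis by (simp add: ac_simps)
qed

lemma F_Midpt_eq_toy_cubic:
  "F_Midpt N u v j = \<i> * toy_cubic (m_av N u v (j - 1)) (m_av N u v j) (m_av N u v (j + 1))"
  using complex_norm_square[of "m_av N u v j"]
  unfolding F_Midpt_def toy_cubic_def Let_def by (simp add: algebra_simps power2_eq_square)

lemma F_Mass_minus_F_Midpt:
  "F_Mass N u v j - F_Midpt N u v j =
     - \<i> * ((ext N u j - ext N v j) * cnj (ext N u j - ext N v j) / 4) * m_av N u v j"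
  using complex_norm_square[of "ext N u j"] complex_norm_square[of "ext N v j"]
    complex_norm_square[of "m_av N u v j"]
  unfolding F_Mass_def F_Midpt_def Let_def a_av_def m_av_def
  by (simp add: algebra_simps power2_eq_square divide_simps)

lemma F_Eng_minus_F_Mass:
  "F_Eng N u v j - F_Mass N u v j =
     2 * \<i> * cnj (m_av N u v j) *
       ((ext N u (j + 1) - ext N v (j + 1))^2 / 4 + (ext N u (j - 1) - ext N v (j - 1))^2 / 4)"
  unfolding F_Mass_def F_Eng_def Let_def q_av_def m_av_def
  by (simp add: algebra_simps power2_eq_square divide_simps)

lemma norm_scheme_rhs_le:
  fixes F :: "nat \<Rightarrow> (nat \<Rightarrow> complex) \<Rightarrow> (nat \<Rightarrow> complex) \<Rightarrow> nat \<Rightarrow> complex"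
  assumes F: "F \<in> {F_Midpt, F_Mass, F_Eng}"
    and u: "\<And>k. cmod (ext N u k) \<le> m" and v: "\<And>k. cmod (ext N v k) \<le> m"
  shows "cmod (F N u v j) \<le> 5 * m^2 * cmod (m_av N u v j)"
proof -
  have sq: "cmod x \<le> m \<Longrightarrow> (cmod x)^2 \<le> m^2" for x by (intro power_mono) auto
  have m_le: "cmod (m_av N u v k) \<le> m" for k
  proof -
    have "cmod (m_av N u v k) \<le> (cmod (ext N u k) + cmod (ext N v k)) / 2"
      unfolding m_av_def by (simp add: norm_triangle_ineq divide_right_mono)
    also have "\<dots> \<le> m" using u[of k] v[of k] by simp
    finally show ?thesis .
  qed
  have a_le: "cmod (a_av N u v j) \<le> m^2"
    unfolding a_av_def norm_of_real using sq[OF u[of j]] sq[OF v[of j]] by simp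
  have q_le: "cmod (q_av N u v k) \<le> m^2" for k
  proof -
    have "cmod (q_av N u v k) \<le> (cmod (ext N u k) ^ 2 + cmod (ext N v k) ^ 2) / 2"
      unfolding q_av_def by (simp add: norm_power[symmetric] norm_triangle_ineq divide_right_mono)
    also have "\<dots> \<le> m^2" using sq[OF u[of k]] sq[OF v[of k]] by simp
    finally show ?thesis .
  qed
  let ?m = "m_av N u v"
  have conserving_rhs_le: "cmod (- \<i> * a * ?m j + 2 * \<i> * cnj (?m j) * (P + Q)) \<le> 5 * m^2 * cmod (?m j)"
    if "cmod a \<le> m^2" "cmod P \<le> m^2" "cmod Q \<le> m^2" for a P Q
  proof -
    have "cmod (- \<i> * a * ?m j + 2 * \<i> * cnj (?m j) * (P + Q))
        \<le> cmod a * cmod (?m j) + 2 * cmod (?m j) * (cmod P + cmod Q)"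
      using norm_triangle_ineq[of "- \<i> * a * ?m j" "2 * \<i> * cnj (?m j) * (P + Q)"]
        norm_triangle_ineq[of P Q]
      by (simp add: norm_mult) (smt (verit) mult_left_mono norm_ge_zero)
    also have "\<dots> \<le> m^2 * cmod (?m j) + 2 * cmod (?m j) * (m^2 + m^2)"
      using that by (intro add_mono mult_right_mono mult_left_mono) auto
    finally show ?thesis by (simp add: algebra_simps)
  qed
  consider "F = F_Midpt" | "F = F_Mass" | "F = F_Eng" using F by blast
  then show ?thesis
  proof cases
    case 1
    have "cmod (toy_cubic (?m (j - 1)) (?m j) (?m (j + 1))) \<le> 5 * m^2 * cmod (?m j)"
      by (rule norm_toy_cubic_le) (use m_le in auto)
    then show ?thesis using 1 by (simp add: F_Midpt_eq_toy_cubic norm_mult)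
  next
    case 2
    have "cmod ((?m (j + 1))^2) \<le> m^2" "cmod ((?m (j - 1))^2) \<le> m^2"
      using sq[OF m_le] by (auto simp: norm_power)
    then show ?thesis using 2 conserving_rhs_le[OF a_le] unfolding F_Mass_def Let_def by simp
  next
    case 3
    then show ?thesis using conserving_rhs_le[OF a_le q_le q_le] unfolding F_Eng_def Let_def by simp
  qed
qed

lemma toy_cubic_mass_flux:
  "c * cnj (\<i> * toy_cubic p c n) + \<i> * toy_cubic p c n * cnj c
     = 2 * \<i> * ((p^2 * cnj c ^ 2 - cnj p ^ 2 * c^2) - (c^2 * cnj n ^ 2 - cnj c ^ 2 * n^2))"
  unfolding toy_cubic_def by (simp add: algebra_simps power2_eq_square)

lemma vnorm_eq_L2_set: "vnorm N w = L2_set (\<lambda>j. cmod (w j)) {1..N}"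
  unfolding vnorm_def L2_set_def ..

lemma vnorm_nonneg: "0 \<le> vnorm N u"
  by (simp add: vnorm_def sum_nonneg)

section \<open>Solutions of the toy model\<close>

locale toy_solution =
  fixes N :: nat and b :: "real \<Rightarrow> nat \<Rightarrow> complex"
  assumes solution: "is_toy_solution N b"
begin

abbreviation M :: real where "M \<equiv> vnorm N (b 0)"

definition velocity :: "real \<Rightarrow> nat \<Rightarrow> complex" where
  "velocity s k = \<i> * toy_cubic (b s (k - 1)) (b s k) (b s (k + 1))"

lemma b_eq_0_outside: "0 \<le> s \<Longrightarrow> k \<notin> {1..N} \<Longrightarrow> b s k = 0"
  using solution unfolding is_toy_solution_def by auto

lemma ext_b: "0 \<le> s \<Longrightarrow> ext N (b s) = b s"
  using b_eq_0_outside by (auto simp: ext_def fun_eq_iff)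

lemma has_vector_derivative_b:
  assumes "0 \<le> s"
  shows "((\<lambda>s. b s k) has_vector_derivative velocity s k) (at s within {0..})"
proof (cases "k \<in> {1..N}")
  case True
  then have "((\<lambda>s. b s k) has_vector_derivative toy_rhs N (b s) k) (at s within {0..})"
    using solution assms unfolding is_toy_solution_def by blast
  then show ?thesis
    by (simp add: toy_rhs_eq_toy_cubic ext_b[OF assms] velocity_def)
next
  case False
  then have "velocity s k = 0"
    using assms by (simp add: velocity_def toy_cubic_def b_eq_0_outside)
  have "((\<lambda>s. 0) has_vector_derivative 0) (at s within {0..})"
    by (rule has_vector_derivative_const)
  then have "((\<lambda>s. b s k) has_vector_derivative 0) (at s within {0..})"
    by (rule has_vector_derivative_transform_within[where d=1]) (use False assms b_eq_0_outside in auto)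
  then show ?thesis using \<open>velocity s k = 0\<close> by simp
qed

text \<open>The mass flux across the bond \<open>(k - 1, k)\<close> telescopes, and vanishes at both ends since
  \<open>b\<^sub>0 = b\<^sub>N\<^sub>+\<^sub>1 = 0\<close>.\<close>

lemma sum_norm_b_square:
  assumes "0 \<le> s"
  shows "(\<Sum>k=1..N. (cmod (b s k))\<^sup>2) = M\<^sup>2"
proof -
  define P where "P t = (\<Sum>k=1..N. b t k * cnj (b t k))" for t
  define flux where "flux t k = (b t (k - 1))^2 * cnj (b t k) ^ 2 - cnj (b t (k - 1)) ^ 2 * (b t k)^2"
    for t k
  have local_flux: "b t k * cnj (velocity t k) + velocity t k * cnj (b t k)
      = - 2 * \<i> * (flux t (Suc k) - flux t k)" for t k
    unfolding velocity_def toy_cubic_mass_flux flux_def by (simp add: algebra_simps)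
  have "(P has_vector_derivative 0) (at t within {0..})" if "t \<in> {0..}" for t
  proof -
    have "(P has_vector_derivative
        (\<Sum>k=1..N. b t k * cnj (velocity t k) + velocity t k * cnj (b t k))) (at t within {0..})"
      unfolding P_def using that by (auto intro!: derivative_eq_intros has_vector_derivative_b)
    moreover have "(\<Sum>k=1..N. flux t (Suc k) - flux t k) = 0"
      using that b_eq_0_outside[of t 0] b_eq_0_outside[of t "Suc N"]
      by (subst sum_Suc_diff) (auto simp: flux_def)
    ultimately show ?thesis by (simp add: local_flux sum_negf flip: sum_distrib_left)
  qed
  then obtain c where "\<And>t. t \<in> {0..} \<Longrightarrow> P t = c"
    using has_vector_derivative_zero_constant[of "{0..}" P] by (auto simp: convex_real_interval)
  then have "P s = P 0" using assms by auto
  then have "complex_of_real (\<Sum>k=1..N. (cmod (b s k))\<^sup>2) = of_real (\<Sum>k=1..N. (cmod (b 0 k))\<^sup>2)"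
    unfolding P_def by (simp add: complex_norm_square flip: of_real_power)
  then have "(\<Sum>k=1..N. (cmod (b s k))\<^sup>2) = (\<Sum>k=1..N. (cmod (b 0 k))\<^sup>2)"
    by (simp only: of_real_eq_iff)
  also have "\<dots> = M\<^sup>2"
    unfolding vnorm_def by (simp add: sum_nonneg)
  finally show ?thesis .
qed

lemma norm_b_le: "0 \<le> s \<Longrightarrow> cmod (b s k) \<le> M"
proof (cases "k \<in> {1..N}")
  case True
  assume "0 \<le> s"
  have "(cmod (b s k))\<^sup>2 \<le> (\<Sum>k=1..N. (cmod (b s k))\<^sup>2)"
    using True by (intro member_le_sum) auto
  then show ?thesis
    using sum_norm_b_square[OF \<open>0 \<le> s\<close>] vnorm_nonneg by (auto intro: power2_le_imp_le)
qed (simp add: b_eq_0_outside vnorm_nonneg)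

lemma norm_velocity_le: "0 \<le> s \<Longrightarrow> cmod (velocity s k) \<le> 5 * M\<^sup>2 * cmod (b s k)"
  unfolding velocity_def norm_mult by (simp add: norm_toy_cubic_le norm_b_le)

lemma continuous_on_b: "0 \<le> t0 \<Longrightarrow> continuous_on {t0..t1} (\<lambda>s. b s k)"
  by (rule continuous_on_vector_derivative,
      rule has_vector_derivative_within_subset[OF has_vector_derivative_b]) auto

lemma norm_b_increment_le:
  assumes "0 \<le> s1" "s1 \<le> s2" and A: "\<And>\<sigma>. \<sigma> \<in> {s1..s2} \<Longrightarrow> cmod (b \<sigma> k) \<le> A"
  shows "cmod (b s2 k - b s1 k) \<le> 5 * M\<^sup>2 * A * (s2 - s1)"
proof (rule norm_diff_le_of_vector_derivative_bound[OF assms(2)])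
  fix \<sigma> assume "\<sigma> \<in> {s1..s2}"
  then have "0 \<le> \<sigma>" using assms(1) by simp
  show "((\<lambda>s. b s k) has_vector_derivative velocity \<sigma> k) (at \<sigma> within {s1..s2})"
    by (rule has_vector_derivative_within_subset[OF has_vector_derivative_b[OF \<open>0 \<le> \<sigma>\<close>]])
       (use assms(1) in auto)
  have "5 * M\<^sup>2 * cmod (b \<sigma> k) \<le> 5 * M\<^sup>2 * A"
    using A[OF \<open>\<sigma> \<in> {s1..s2}\<close>] by (intro mult_left_mono) simp_all
  then show "cmod (velocity \<sigma> k) \<le> 5 * M\<^sup>2 * A"
    using norm_velocity_le[OF \<open>0 \<le> \<sigma>\<close>, of k] by linarith
qed

text \<open>At the time where \<open>|b\<^sub>k|\<close> is maximal on the window, its increment from \<open>t\<^sub>0\<close> is at most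
  half of that maximum.\<close>

lemma norm_b_le_twice_initial:
  assumes "0 \<le> t0" "0 \<le> h" "h * (5 * M\<^sup>2) \<le> 1/2" "s \<in> {t0..t0+h}"
  shows "cmod (b s k) \<le> 2 * cmod (b t0 k)"
proof -
  obtain x where x: "x \<in> {t0..t0+h}"
    and x_max: "\<And>y. y \<in> {t0..t0+h} \<Longrightarrow> cmod (b y k) \<le> cmod (b x k)"
    using continuous_attains_sup[of "{t0..t0+h}" "\<lambda>s. cmod (b s k)"]
      continuous_on_norm[OF continuous_on_b[OF assms(1)]] assms(2) by auto
  have "cmod (b x k - b t0 k) \<le> 5 * M\<^sup>2 * cmod (b x k) * (x - t0)"
    by (rule norm_b_increment_le) (use x x_max assms(1) in auto)
  also have "\<dots> \<le> 5 * M\<^sup>2 * cmod (b x k) * h"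
    by (rule mult_left_mono) (use x in auto)
  also have "\<dots> = (h * (5 * M\<^sup>2)) * cmod (b x k)"
    by (simp only: ac_simps)
  also have "\<dots> \<le> 1/2 * cmod (b x k)"
    by (rule mult_right_mono) (use assms(3) in auto)
  finally have "cmod (b x k) \<le> 2 * cmod (b t0 k)"
    using norm_triangle_sub[of "b x k" "b t0 k"] by linarith
  then show ?thesis using x_max[OF assms(4)] by linarith
qed

lemma L2_set_norm_b: "0 \<le> s \<Longrightarrow> L2_set (\<lambda>j. cmod (b s j)) {1..N} = M"
  using sum_norm_b_square[of s] vnorm_nonneg[of N "b 0"] by (simp add: L2_set_def)

lemma local_error_crude_le:
  fixes F :: "nat \<Rightarrow> (nat \<Rightarrow> complex) \<Rightarrow> (nat \<Rightarrow> complex) \<Rightarrow> nat \<Rightarrow> complex"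
  assumes F: "F \<in> {F_Midpt, F_Mass, F_Eng}" and "0 \<le> t0" "0 < h"
  shows "vnorm N (\<lambda>j. b (t0 + h) j - b t0 j - of_real h * F N (b t0) (b (t0 + h)) j)
           \<le> (1 + 5 * M\<^sup>2 * h) * (2 * M)"
proof -
  let ?c = "1 + 5 * M\<^sup>2 * h"
  let ?u = "b t0" and ?v = "b (t0 + h)"
  have ext_uv: "ext N ?u = ?u" "ext N ?v = ?v" using ext_b assms(2,3) by simp_all
  have component_le: "cmod (?v j - ?u j - of_real h * F N ?u ?v j) \<le> ?c * (cmod (?u j) + cmod (?v j))"
    for j
  proof -
    have "cmod (F N ?u ?v j) \<le> 5 * M\<^sup>2 * cmod (m_av N ?u ?v j)"
      using norm_b_le assms(2,3) by (intro norm_scheme_rhs_le[OF F]) (simp_all add: ext_uv)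
    also have "\<dots> \<le> 5 * M\<^sup>2 * (cmod (?u j) + cmod (?v j))"
    proof (intro mult_left_mono)
      show "cmod (m_av N ?u ?v j) \<le> cmod (?u j) + cmod (?v j)"
        unfolding m_av_def ext_uv using norm_triangle_ineq[of "?u j" "?v j"]
        by (simp add: norm_divide) (smt (verit) norm_ge_zero)
    qed simp
    finally have "cmod (of_real h * F N ?u ?v j) \<le> h * (5 * M\<^sup>2 * (cmod (?u j) + cmod (?v j)))"
      using assms(3) by (simp add: norm_mult mult_left_mono)
    moreover have "cmod (?v j - ?u j) \<le> cmod (?u j) + cmod (?v j)"
      by (metis add.commute norm_triangle_ineq4)
    ultimately show ?thesis
      using norm_triangle_ineq4[of "?v j - ?u j" "of_real h * F N ?u ?v j"]
      by (simp add: algebra_simps)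
  qed
  have "vnorm N (\<lambda>j. ?v j - ?u j - of_real h * F N ?u ?v j)
      \<le> L2_set (\<lambda>j. ?c * (cmod (?u j) + cmod (?v j))) {1..N}"
    unfolding vnorm_eq_L2_set[where w="\<lambda>j. ?v j - ?u j - of_real h * F N ?u ?v j"]
    by (rule L2_set_mono) (use component_le in auto)
  also have "\<dots> = ?c * L2_set (\<lambda>j. cmod (?u j) + cmod (?v j)) {1..N}"
    using assms(3) by (simp add: L2_set_right_distrib)
  also have "\<dots> \<le> ?c * (L2_set (\<lambda>j. cmod (?u j)) {1..N} + L2_set (\<lambda>j. cmod (?v j)) {1..N})"
    using assms(3) by (intro mult_left_mono L2_set_triangle_ineq) simp
  also have "\<dots> = ?c * (2 * M)" using L2_set_norm_b assms(2,3) by simp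
  finally show ?thesis .
qed

end

section \<open>Short time windows\<close>

definition lip_const :: "real \<Rightarrow> real" where
  "lip_const m = max 1 (5 * m\<^sup>2)"

definition vel_lip_const :: "real \<Rightarrow> real" where
  "vel_lip_const m = 35 * lip_const m ^ 3 * (2 * m)\<^sup>2"

definition curv_const :: "real \<Rightarrow> real" where
  "curv_const m = max (lip_const m) (2 * vel_lip_const m)"

lemma lip_const_ge: "1 \<le> lip_const m" "5 * m\<^sup>2 \<le> lip_const m"
  unfolding lip_const_def by simp_all

lemma curv_const_ge:
  "lip_const m \<le> curv_const m" "2 * vel_lip_const m \<le> curv_const m" "1 \<le> curv_const m"
  unfolding curv_const_def using lip_const_ge[of m] by simp_all

lemma vel_lip_const_nonneg: "0 \<le> vel_lip_const m"
  unfolding vel_lip_const_def using lip_const_ge[of m] by simp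

locale toy_window = toy_solution +
  fixes t0 h :: real
  assumes t0_nonneg: "0 \<le> t0" and h_pos: "0 < h" and h_small: "h * curv_const M \<le> 1/2"
begin

definition weight :: "nat \<Rightarrow> real" where
  "weight k = 2 * cmod (b t0 k)"

definition mid_time :: real where
  "mid_time = t0 + h/2"

lemma h_le_half: "h \<le> 1/2"
  using h_small curv_const_ge(3)[of M] h_pos
  by (smt (verit, best) mult_le_cancel_left1)

lemma h_lip_le_half: "h * lip_const M \<le> 1/2"
  using h_small curv_const_ge(1)[of M] h_pos by (smt (verit) mult_left_mono)

lemma weight_nonneg: "0 \<le> weight k"
  by (simp add: weight_def)

lemma weight_le: "weight k \<le> 2 * M"
  unfolding weight_def using norm_b_le[OF t0_nonneg] by simp

lemma norm_b_le_weight: "s \<in> {t0..t0+h} \<Longrightarrow> cmod (b s k) \<le> weight k"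
  unfolding weight_def
proof (rule norm_b_le_twice_initial[OF t0_nonneg])
  show "h * (5 * M\<^sup>2) \<le> 1/2"
    using h_lip_le_half lip_const_ge(2)[of M] h_pos by (smt (verit) mult_left_mono)
qed (use h_pos in auto)

lemma norm_b_diff_le:
  assumes "s \<in> {t0..t0+h}" "s' \<in> {t0..t0+h}"
  shows "cmod (b s k - b s' k) \<le> \<bar>s - s'\<bar> * lip_const M * weight k"
proof -
  have ordered: "cmod (b y k - b x k) \<le> (y - x) * lip_const M * weight k"
    if "x \<in> {t0..t0+h}" "y \<in> {t0..t0+h}" "x \<le> y" for x y
  proof -
    have "cmod (b y k - b x k) \<le> 5 * M\<^sup>2 * weight k * (y - x)"
      by (rule norm_b_increment_le) (use that t0_nonneg norm_b_le_weight in auto)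
    also have "\<dots> \<le> lip_const M * weight k * (y - x)"
      using lip_const_ge(2)[of M] weight_nonneg[of k] that(3)
      by (intro mult_right_mono) auto
    finally show ?thesis by (simp add: ac_simps)
  qed
  show ?thesis
  proof (cases "s' \<le> s")
    case True
    then show ?thesis using ordered[OF assms(2,1)] by simp
  next
    case False
    then show ?thesis using ordered[OF assms] by (simp add: norm_minus_commute)
  qed
qed

lemma norm_velocity_diff_le:
  assumes "s \<in> {t0..t0+h}" "s' \<in> {t0..t0+h}"
  shows "cmod (velocity s k - velocity s' k) \<le> vel_lip_const M * weight k * \<bar>s - s'\<bar>"
proof -
  let ?\<tau> = "\<bar>s - s'\<bar>"
  have "cmod (toy_cubic (b s' (k - 1) + (b s (k - 1) - b s' (k - 1))) (b s' k + (b s k - b s' k))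
          (b s' (k + 1) + (b s (k + 1) - b s' (k + 1))) - toy_cubic (b s' (k - 1)) (b s' k) (b s' (k + 1)))
      \<le> 35 * lip_const M ^ 3 * (2 * M)\<^sup>2 * ?\<tau> * weight k"
  proof (rule norm_toy_cubic_perturb_le[where Ap="weight (k - 1)" and Ac="weight k"
        and An="weight (k + 1)"])
    show "?\<tau> \<le> 1" using assms h_le_half by auto
  qed (use assms norm_b_le_weight norm_b_diff_le weight_le lip_const_ge in auto)
  then show ?thesis
    by (simp add: velocity_def norm_mult vel_lip_const_def flip: right_diff_distrib)
       (simp add: ac_simps)
qed

lemma norm_b_linearization_le:
  assumes "s \<in> {t0..t0+h}"
  shows "cmod (b s k - b mid_time k - of_real (s - mid_time) * velocity mid_time k)
           \<le> (h/2)\<^sup>2 * vel_lip_const M * weight k"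
proof -
  have mid: "mid_time \<in> {t0..t0+h}" using h_pos by (simp add: mid_time_def)
  have "norm (b s k - b mid_time k - (s - mid_time) *\<^sub>R velocity mid_time k)
      \<le> norm (s - mid_time) * (vel_lip_const M * weight k * (h/2))"
  proof (rule vector_differentiable_bound_linearization[where S="{t0..t0+h}"])
    fix x assume x: "x \<in> {t0..t0+h}"
    then show "((\<lambda>s. b s k) has_vector_derivative velocity x k) (at x within {t0..t0+h})"
      using t0_nonneg by (intro has_vector_derivative_within_subset[OF has_vector_derivative_b]) auto
    have "cmod (velocity x k - velocity mid_time k) \<le> vel_lip_const M * weight k * \<bar>x - mid_time\<bar>"
      by (rule norm_velocity_diff_le[OF x mid])
    also have "\<dots> \<le> vel_lip_const M * weight k * (h/2)"
      using x vel_lip_const_nonneg weight_nonneg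
      by (intro mult_left_mono) (auto simp: mid_time_def abs_if)
    finally show "norm (velocity x k - velocity mid_time k) \<le> vel_lip_const M * weight k * (h/2)" .
  qed (use assms mid in \<open>auto simp: closed_segment_eq_real_ivl\<close>)
  also have "\<dots> \<le> (h/2) * (vel_lip_const M * weight k * (h/2))"
    using assms vel_lip_const_nonneg weight_nonneg
    by (intro mult_right_mono) (auto simp: mid_time_def abs_if mult_nonneg_nonneg)
  finally show ?thesis
    by (simp add: scaleR_conv_of_real power2_eq_square ac_simps)
qed

text \<open>The velocity terms of the two linearizations cancel.\<close>

lemma norm_b_second_diff_le:
  assumes "0 \<le> \<tau>" "\<tau> \<le> h/2"
  shows "cmod (b (mid_time + \<tau>) k + b (mid_time - \<tau>) k - 2 * b mid_time k)
           \<le> (h/2)\<^sup>2 * curv_const M * weight k"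
proof -
  have "b (mid_time + \<tau>) k + b (mid_time - \<tau>) k - 2 * b mid_time k
      = (b (mid_time + \<tau>) k - b mid_time k - of_real (mid_time + \<tau> - mid_time) * velocity mid_time k)
      + (b (mid_time - \<tau>) k - b mid_time k - of_real (mid_time - \<tau> - mid_time) * velocity mid_time k)"
    by (simp add: algebra_simps)
  also have "cmod \<dots> \<le> (h/2)\<^sup>2 * vel_lip_const M * weight k + (h/2)\<^sup>2 * vel_lip_const M * weight k"
    using assms
    by (intro order_trans[OF norm_triangle_ineq] add_mono norm_b_linearization_le)
       (auto simp: mid_time_def)
  also have "\<dots> = (h/2)\<^sup>2 * (2 * vel_lip_const M) * weight k"
    by (simp add: algebra_simps)
  also have "\<dots> \<le> (h/2)\<^sup>2 * curv_const M * weight k"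
    using curv_const_ge(2)[of M] weight_nonneg[of k] by (intro mult_right_mono mult_left_mono) auto
  finally show ?thesis .
qed

lemma mid_time_shift_in_window:
  "\<bar>x\<bar> \<le> h/2 \<Longrightarrow> mid_time + x \<in> {t0..t0+h}"
  by (auto simp: mid_time_def abs_le_iff)

lemma norm_b_diff_mid_le:
  assumes "\<bar>x\<bar> \<le> h/2"
  shows "cmod (b (mid_time + x) k - b mid_time k) \<le> (h/2) * curv_const M * weight k"
proof -
  have "cmod (b (mid_time + x) k - b mid_time k) \<le> \<bar>x\<bar> * lip_const M * weight k"
    using norm_b_diff_le[OF mid_time_shift_in_window[OF assms] mid_time_shift_in_window[of 0]]
      h_pos by simp
  also have "\<dots> \<le> (h/2) * curv_const M * weight k"
    using assms curv_const_ge(1)[of M] lip_const_ge(1)[of M] weight_nonneg[of k]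
    by (intro mult_right_mono mult_mono) auto
  finally show ?thesis .
qed

lemma norm_velocity_second_diff_le:
  assumes "0 \<le> x" "x \<le> h/2"
  shows "cmod (velocity (mid_time + x) j + velocity (mid_time - x) j - 2 * velocity mid_time j)
           \<le> 55 * curv_const M ^ 3 * (2 * M)\<^sup>2 * (h/2)\<^sup>2 * weight j"
proof -
  let ?t = mid_time and ?B = "curv_const M"
  have diff_plus: "cmod (b (?t + x) k - b ?t k) \<le> (h/2) * ?B * weight k" for k
    using norm_b_diff_mid_le[of x] assms by simp
  have diff_minus: "cmod (b (?t - x) k - b ?t k) \<le> (h/2) * ?B * weight k" for k
    using norm_b_diff_mid_le[of "- x"] assms by simp
  have diff_sum: "cmod (b (?t + x) k - b ?t k + (b (?t - x) k - b ?t k)) \<le> (h/2)\<^sup>2 * ?B * weight k"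
    for k using norm_b_second_diff_le[OF assms, of k] by (simp add: algebra_simps)
  have "cmod (toy_cubic (b ?t (j - 1) + (b (?t + x) (j - 1) - b ?t (j - 1)))
          (b ?t j + (b (?t + x) j - b ?t j)) (b ?t (j + 1) + (b (?t + x) (j + 1) - b ?t (j + 1)))
        + toy_cubic (b ?t (j - 1) + (b (?t - x) (j - 1) - b ?t (j - 1)))
          (b ?t j + (b (?t - x) j - b ?t j)) (b ?t (j + 1) + (b (?t - x) (j + 1) - b ?t (j + 1)))
        - 2 * toy_cubic (b ?t (j - 1)) (b ?t j) (b ?t (j + 1)))
      \<le> 55 * ?B ^ 3 * (2 * M)\<^sup>2 * (h/2)\<^sup>2 * weight j"
    by (rule norm_toy_cubic_second_diff_le[where Ap="weight (j - 1)" and Ac="weight j"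
          and An="weight (j + 1)"])
       (use h_pos h_le_half diff_plus diff_minus diff_sum weight_le curv_const_ge(3)
          norm_b_le_weight[OF mid_time_shift_in_window[of 0]] in simp_all)
  moreover have "velocity (?t + x) j + velocity (?t - x) j - 2 * velocity ?t j
      = \<i> * (toy_cubic (b (?t + x) (j - 1)) (b (?t + x) j) (b (?t + x) (j + 1))
        + toy_cubic (b (?t - x) (j - 1)) (b (?t - x) j) (b (?t - x) (j + 1))
        - 2 * toy_cubic (b ?t (j - 1)) (b ?t j) (b ?t (j + 1)))"
    unfolding velocity_def by (simp add: algebra_simps)
  ultimately show ?thesis by (simp add: norm_mult)
qed

text \<open>Midpoint quadrature: \<open>\<phi>(x) = b(t\<^sub>m + x) - b(t\<^sub>m - x) - 2x b'(t\<^sub>m)\<close> vanishes to first order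
  at \<open>0\<close>, and its derivative is the symmetric second difference of the velocity.\<close>

lemma midpoint_quadrature_error_le:
  "cmod (b (t0 + h) j - b t0 j - of_real h * velocity mid_time j)
     \<le> (h/2) * (55 * curv_const M ^ 3 * (2 * M)\<^sup>2 * (h/2)\<^sup>2 * weight j)"
proof -
  let ?t = mid_time and ?K = "55 * curv_const M ^ 3 * (2 * M)\<^sup>2 * (h/2)\<^sup>2 * weight j"
  define \<phi> where "\<phi> x = b (?t + x) j - b (?t - x) j - 2 * of_real x * velocity ?t j" for x
  define \<phi>' where "\<phi>' x = velocity (?t + x) j + velocity (?t - x) j - 2 * velocity ?t j" for x
  have "(\<phi> has_vector_derivative \<phi>' x) (at x within {0..h/2})" if "x \<in> {0..h/2}" for x
  proof -
    have "0 \<le> ?t + x" "0 \<le> ?t - x" using that t0_nonneg by (auto simp: mid_time_def)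
    have into_domain: "(\<lambda>x. ?t + x) ` {0..h/2} \<subseteq> {0..}" "(\<lambda>x. ?t - x) ` {0..h/2} \<subseteq> {0..}"
      using t0_nonneg h_pos by (auto simp: mid_time_def)
    have "((\<lambda>x. ?t + x) has_vector_derivative 1) (at x within {0..h/2})"
      "((\<lambda>x. ?t - x) has_vector_derivative -1) (at x within {0..h/2})"
      by (auto intro!: derivative_eq_intros simp flip: has_real_derivative_iff_has_vector_derivative)
    from this(1)[THEN vector_diff_chain_within,
        OF has_vector_derivative_within_subset[OF has_vector_derivative_b into_domain(1)]]
      this(2)[THEN vector_diff_chain_within,
        OF has_vector_derivative_within_subset[OF has_vector_derivative_b into_domain(2)]]
    have plus: "((\<lambda>x. b (?t + x) j) has_vector_derivative velocity (?t + x) j) (at x within {0..h/2})"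
      and minus: "((\<lambda>x. b (?t - x) j) has_vector_derivative - velocity (?t - x) j) (at x within {0..h/2})"
      using \<open>0 \<le> ?t + x\<close> \<open>0 \<le> ?t - x\<close> by (simp_all add: o_def)
    show ?thesis
      unfolding \<phi>_def \<phi>'_def using plus minus by (auto intro!: derivative_eq_intros)
  qed
  then have "norm (\<phi> (h/2) - \<phi> 0 - (h/2 - 0) *\<^sub>R \<phi>' 0) \<le> norm (h/2 - 0) * ?K"
    using norm_velocity_second_diff_le h_pos
    by (intro vector_differentiable_bound_linearization[where S="{0..h/2}"])
       (auto simp: \<phi>'_def closed_segment_eq_real_ivl)
  moreover have "\<phi> (h/2) = b (t0 + h) j - b t0 j - of_real h * velocity ?t j"
    unfolding \<phi>_def mid_time_def by (simp add: algebra_simps)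
  moreover have "\<phi> 0 = 0" "\<phi>' 0 = 0" unfolding \<phi>_def \<phi>'_def by simp_all
  ultimately show ?thesis using h_pos by simp
qed

lemma m_av_b: "m_av N (b t0) (b (t0 + h)) = (\<lambda>k. (b t0 k + b (t0 + h) k) / 2)"
  using ext_b t0_nonneg h_pos by (auto simp: m_av_def fun_eq_iff)

lemma velocity_mid_time_minus_F_Midpt_le:
  "cmod (velocity mid_time j - F_Midpt N (b t0) (b (t0 + h)) j)
     \<le> 35 * curv_const M ^ 3 * (2 * M)\<^sup>2 * (h/2)\<^sup>2 * weight j"
proof -
  let ?t = mid_time and ?B = "curv_const M"
  define E where "E k = (b (?t + h/2) k + b (?t - h/2) k - 2 * b ?t k) / 2" for k
  have "?t + h/2 = t0 + h" "?t - h/2 = t0" by (simp_all add: mid_time_def)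
  then have avg: "(b t0 k + b (t0 + h) k) / 2 = b ?t k + E k" for k
    unfolding E_def by (simp only:) (simp add: field_simps)
  have E_le: "cmod (E k) \<le> (h/2)\<^sup>2 * ?B * weight k" for k
  proof -
    have "cmod (E k) \<le> (h/2)\<^sup>2 * ?B * weight k / 2"
      unfolding E_def using norm_b_second_diff_le[of "h/2" k] h_pos by (simp add: norm_divide)
    also have "\<dots> \<le> (h/2)\<^sup>2 * ?B * weight k"
      using curv_const_ge(3)[of M] weight_nonneg[of k] by simp
    finally show ?thesis .
  qed
  have "(h/2)\<^sup>2 \<le> 1" using h_pos h_le_half by (simp add: power_le_one)
  then have "cmod (toy_cubic (b ?t (j - 1) + E (j - 1)) (b ?t j + E j) (b ?t (j + 1) + E (j + 1))
        - toy_cubic (b ?t (j - 1)) (b ?t j) (b ?t (j + 1)))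
      \<le> 35 * ?B ^ 3 * (2 * M)\<^sup>2 * (h/2)\<^sup>2 * weight j"
    by (intro norm_toy_cubic_perturb_le[where Ap="weight (j - 1)" and Ac="weight j"
          and An="weight (j + 1)"])
       (use E_le weight_le curv_const_ge(3) norm_b_le_weight[OF mid_time_shift_in_window[of 0]]
          h_pos in simp_all)
  then show ?thesis
    by (simp add: F_Midpt_eq_toy_cubic m_av_b avg velocity_def norm_mult
        flip: right_diff_distrib norm_minus_commute)
qed

lemma F_Midpt_local_error_le:
  "cmod (b (t0 + h) j - b t0 j - of_real h * F_Midpt N (b t0) (b (t0 + h)) j)
     \<le> 16 * curv_const M ^ 3 * (2 * M)\<^sup>2 * h ^ 3 * weight j"
proof -
  let ?X = "curv_const M ^ 3 * (2 * M)\<^sup>2 * weight j" and ?F = "F_Midpt N (b t0) (b (t0 + h)) j"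
  have X: "0 \<le> ?X" using curv_const_ge(3)[of M] weight_nonneg[of j] by simp
  have "b (t0 + h) j - b t0 j - of_real h * ?F
      = (b (t0 + h) j - b t0 j - of_real h * velocity mid_time j) + of_real h * (velocity mid_time j - ?F)"
    by (simp add: algebra_simps)
  also have "cmod \<dots> \<le> (h/2) * (55 * ?X * (h/2)\<^sup>2) + h * (35 * ?X * (h/2)\<^sup>2)"
    using midpoint_quadrature_error_le[of j] velocity_mid_time_minus_F_Midpt_le[of j] h_pos
    by (intro order_trans[OF norm_triangle_ineq] add_mono)
       (auto simp: norm_mult ac_simps intro: mult_left_mono)
  also have "\<dots> = 125/8 * ?X * h ^ 3"
    by (simp add: power2_eq_square power3_eq_cube field_simps)
  also have "\<dots> \<le> 16 * ?X * h ^ 3"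
    using X h_pos by (intro mult_right_mono) auto
  finally show ?thesis by (simp add: ac_simps)
qed

lemma norm_b_step_le: "cmod (b t0 k - b (t0 + h) k) \<le> h * curv_const M * (2 * M)"
proof -
  have "cmod (b t0 k - b (t0 + h) k) \<le> h * lip_const M * weight k"
    using norm_b_diff_le[of t0 "t0 + h" k] h_pos by simp
  also have "\<dots> \<le> h * curv_const M * (2 * M)"
    using h_pos lip_const_ge(1)[of M] curv_const_ge(1)[of M] weight_le[of k] weight_nonneg[of k]
    by (intro mult_mono mult_left_mono) auto
  finally show ?thesis .
qed

lemma norm_m_av_b_le: "cmod (m_av N (b t0) (b (t0 + h)) j) \<le> weight j"
proof -
  have "cmod (b t0 j + b (t0 + h) j) \<le> weight j + weight j"
    using norm_triangle_ineq[of "b t0 j" "b (t0 + h) j"] norm_b_le_weight[of t0 j]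
      norm_b_le_weight[of "t0 + h" j] h_pos t0_nonneg by simp
  then show ?thesis by (simp add: m_av_b norm_divide)
qed

lemma F_minus_F_Midpt_le:
  assumes "F \<in> {F_Midpt, F_Mass, F_Eng}"
  shows "cmod (F N (b t0) (b (t0 + h)) j - F_Midpt N (b t0) (b (t0 + h)) j)
           \<le> 2 * (h * curv_const M * (2 * M))\<^sup>2 * weight j"
proof -
  let ?u = "b t0" and ?v = "b (t0 + h)" and ?K = "(h * curv_const M * (2 * M))\<^sup>2"
  have ext_uv: "ext N ?u = ?u" "ext N ?v = ?v" using ext_b t0_nonneg h_pos by simp_all
  have step_sq: "(cmod (?u k - ?v k))\<^sup>2 \<le> ?K" for k
    using norm_b_step_le[of k] by (intro power_mono) simp_all
  have K: "0 \<le> ?K" by simp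
  have mass: "cmod (F_Mass N ?u ?v j - F_Midpt N ?u ?v j) \<le> ?K * weight j"
  proof -
    have "cmod (F_Mass N ?u ?v j - F_Midpt N ?u ?v j)
        = (cmod (?u j - ?v j))\<^sup>2 / 4 * cmod (m_av N ?u ?v j)"
      unfolding F_Mass_minus_F_Midpt ext_uv
      by (simp add: norm_mult norm_divide power2_eq_square flip: complex_cnj_diff)
    also have "\<dots> \<le> ?K / 4 * weight j"
      using step_sq[of j] norm_m_av_b_le[of j] by (intro mult_mono divide_right_mono) auto
    also have "\<dots> \<le> ?K * weight j" using K weight_nonneg[of j] by simp
    finally show ?thesis .
  qed
  have energy: "cmod (F_Eng N ?u ?v j - F_Mass N ?u ?v j) \<le> ?K * weight j"
  proof -
    have "cmod (F_Eng N ?u ?v j - F_Mass N ?u ?v j)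
        \<le> 2 * cmod (m_av N ?u ?v j) * ((cmod (?u (j + 1) - ?v (j + 1)))\<^sup>2 / 4
          + (cmod (?u (j - 1) - ?v (j - 1)))\<^sup>2 / 4)"
      unfolding F_Eng_minus_F_Mass ext_uv norm_mult
      using norm_triangle_ineq[of "(?u (j + 1) - ?v (j + 1))\<^sup>2 / 4"
          "(?u (j - 1) - ?v (j - 1))\<^sup>2 / 4"]
      by (simp add: norm_divide norm_power mult_left_mono)
    also have "\<dots> \<le> 2 * weight j * (?K / 4 + ?K / 4)"
      using step_sq norm_m_av_b_le[of j] weight_nonneg[of j]
      by (intro mult_mono add_mono divide_right_mono) auto
    finally show ?thesis by (simp add: mult.commute)
  qed
  have Kw: "0 \<le> ?K * weight j" using K weight_nonneg[of j] by simp
  consider "F = F_Midpt" | "F = F_Mass" | "F = F_Eng" using assms by blast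
  then show ?thesis
  proof cases
    case 1
    then show ?thesis using Kw by (simp add: mult.commute)
  next
    case 2
    then show ?thesis using mass Kw by (simp add: mult.assoc)
  next
    case 3
    have "cmod (F_Eng N ?u ?v j - F_Midpt N ?u ?v j)
        \<le> cmod (F_Eng N ?u ?v j - F_Mass N ?u ?v j) + cmod (F_Mass N ?u ?v j - F_Midpt N ?u ?v j)"
      using norm_triangle_ineq[of "F_Eng N ?u ?v j - F_Mass N ?u ?v j"
          "F_Mass N ?u ?v j - F_Midpt N ?u ?v j"] by simp
    then show ?thesis using 3 mass energy by simp
  qed
qed

lemma scheme_local_error_le:
  assumes "F \<in> {F_Midpt, F_Mass, F_Eng}"
  shows "cmod (b (t0 + h) j - b t0 j - of_real h * F N (b t0) (b (t0 + h)) j)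
           \<le> 18 * curv_const M ^ 3 * (2 * M)\<^sup>2 * h ^ 3 * weight j"
proof -
  let ?u = "b t0" and ?v = "b (t0 + h)" and ?B = "curv_const M"
  have "b (t0 + h) j - b t0 j - of_real h * F N ?u ?v j
      = (b (t0 + h) j - b t0 j - of_real h * F_Midpt N ?u ?v j)
        - of_real h * (F N ?u ?v j - F_Midpt N ?u ?v j)"
    by (simp add: algebra_simps)
  then have "cmod (b (t0 + h) j - b t0 j - of_real h * F N ?u ?v j)
      \<le> cmod (b (t0 + h) j - b t0 j - of_real h * F_Midpt N ?u ?v j)
        + cmod (of_real h * (F N ?u ?v j - F_Midpt N ?u ?v j))"
    by (simp only: norm_triangle_ineq4)
  also have "\<dots> \<le> 16 * ?B ^ 3 * (2 * M)\<^sup>2 * h ^ 3 * weight j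
      + h * (2 * (h * ?B * (2 * M))\<^sup>2 * weight j)"
    using F_Midpt_local_error_le[of j] F_minus_F_Midpt_le[OF assms, of j] h_pos
    by (intro add_mono) (simp_all add: norm_mult mult_left_mono)
  also have "\<dots> = (16 * ?B ^ 3 + 2 * ?B\<^sup>2) * ((2 * M)\<^sup>2 * h ^ 3 * weight j)"
    by (simp add: power2_eq_square power3_eq_cube algebra_simps)
  also have "\<dots> \<le> (18 * ?B ^ 3) * ((2 * M)\<^sup>2 * h ^ 3 * weight j)"
  proof (rule mult_right_mono)
    have "?B\<^sup>2 \<le> ?B ^ 3" using curv_const_ge(3)[of M] by (simp add: power2_eq_square power3_eq_cube)
    then show "16 * ?B ^ 3 + 2 * ?B\<^sup>2 \<le> 18 * ?B ^ 3" by simp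
  qed (use h_pos weight_nonneg in simp)
  finally show ?thesis by (simp add: ac_simps)
qed

lemma window_local_error_le:
  assumes "F \<in> {F_Midpt, F_Mass, F_Eng}"
  shows "vnorm N (\<lambda>j. b (t0 + h) j - b t0 j - of_real h * F N (b t0) (b (t0 + h)) j)
           \<le> 36 * curv_const M ^ 3 * (2 * M)\<^sup>2 * M * h ^ 3"
proof -
  let ?K = "18 * curv_const M ^ 3 * (2 * M)\<^sup>2 * h ^ 3"
  have K: "0 \<le> ?K" using curv_const_ge(3)[of M] h_pos by simp
  have "vnorm N (\<lambda>j. b (t0 + h) j - b t0 j - of_real h * F N (b t0) (b (t0 + h)) j)
      \<le> L2_set (\<lambda>j. ?K * weight j) {1..N}"
    unfolding vnorm_eq_L2_set[where w="\<lambda>j. b (t0 + h) j - b t0 j - of_real h * F N (b t0) (b (t0 + h)) j"]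
    by (rule L2_set_mono) (use scheme_local_error_le[OF assms] in auto)
  also have "\<dots> = ?K * L2_set weight {1..N}"
    using K by (simp add: L2_set_right_distrib)
  also have "L2_set weight {1..N} = 2 * M"
    using L2_set_norm_b[OF t0_nonneg] L2_set_right_distrib[of 2 "\<lambda>j. cmod (b t0 j)" "{1..N}"]
    by (simp add: weight_def[abs_def])
  finally show ?thesis by (simp add: ac_simps)
qed

end

definition err_const :: "real \<Rightarrow> real" where
  "err_const m = 36 * curv_const m ^ 3 * (2 * m)\<^sup>2 * m + 16 * m * curv_const m ^ 3
     + 40 * m ^ 3 * (curv_const m)\<^sup>2"

context toy_solution
begin

text \<open>Steps with \<open>h \<ge> 1 / (2 curv_const M)\<close> are covered by the crude bound, since then
  \<open>1 \<le> (2 h curv_const M)\<^sup>3\<close>.\<close>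

lemma local_error_le:
  fixes F :: "nat \<Rightarrow> (nat \<Rightarrow> complex) \<Rightarrow> (nat \<Rightarrow> complex) \<Rightarrow> nat \<Rightarrow> complex"
  assumes F: "F \<in> {F_Midpt, F_Mass, F_Eng}" and "0 \<le> t0" "0 < h"
  shows "vnorm N (\<lambda>j. b (t0 + h) j - b t0 j - of_real h * F N (b t0) (b (t0 + h)) j)
           \<le> err_const M * h ^ 3"
proof -
  let ?B = "curv_const M"
  have B: "1 \<le> ?B" by (rule curv_const_ge(3))
  have M: "0 \<le> M" by (rule vnorm_nonneg)
  show ?thesis
  proof (cases "h * ?B \<le> 1/2")
    case True
    interpret toy_window N b t0 h by unfold_locales (use assms True in auto)
    have "0 \<le> (16 * M * ?B ^ 3 + 40 * M ^ 3 * ?B\<^sup>2) * h ^ 3"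
      using B M assms(3) by simp
    then show ?thesis
      using window_local_error_le[OF F] by (simp add: err_const_def algebra_simps)
  next
    case False
    then have big: "1 \<le> 2 * ?B * h" by (simp add: mult.commute)
    have "vnorm N (\<lambda>j. b (t0 + h) j - b t0 j - of_real h * F N (b t0) (b (t0 + h)) j)
        \<le> 2 * M * 1 + 10 * M ^ 3 * (h * 1)"
      using local_error_crude_le[OF assms] by (simp add: algebra_simps power2_eq_square power3_eq_cube)
    also have "\<dots> \<le> 2 * M * (2 * ?B * h) ^ 3 + 10 * M ^ 3 * (h * (2 * ?B * h)\<^sup>2)"
      using big M assms(3) by (intro add_mono mult_left_mono one_le_power) auto
    also have "\<dots> = (16 * M * ?B ^ 3 + 40 * M ^ 3 * ?B\<^sup>2) * h ^ 3"
      by (simp add: algebra_simps power2_eq_square power3_eq_cube)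
    also have "\<dots> \<le> err_const M * h ^ 3"
      using B M assms(3) by (intro mult_right_mono) (simp_all add: err_const_def)
    finally show ?thesis .
  qed
qed

end

theorem lemma3p5:
  fixes F :: "nat \<Rightarrow> (nat \<Rightarrow> complex) \<Rightarrow> (nat \<Rightarrow> complex) \<Rightarrow> nat \<Rightarrow> complex"
  assumes "F \<in> {F_Midpt, F_Mass, F_Eng}"
  shows "\<exists>C :: real \<Rightarrow> real. \<forall>N \<ge> 1. \<forall>b. is_toy_solution N b \<longrightarrow>
           (\<forall>dt > 0. \<forall>n :: nat.
              vnorm N (\<lambda>j. b (real (Suc n) * dt) j - b (real n * dt) j
                 - complex_of_real dt * F N (b (real n * dt)) (b (real (Suc n) * dt)) j)
              \<le> C (vnorm N (b 0)) * dt ^ 3)"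
proof (intro exI[of _ err_const] allI impI)
  fix N :: nat and b :: "real \<Rightarrow> nat \<Rightarrow> complex" and dt :: real and n :: nat
  assume "is_toy_solution N b" and "0 < dt"
  then interpret toy_solution N b by unfold_locales
  have "real (Suc n) * dt = real n * dt + dt" by (simp add: algebra_simps)
  then show "vnorm N (\<lambda>j. b (real (Suc n) * dt) j - b (real n * dt) j
                 - complex_of_real dt * F N (b (real n * dt)) (b (real (Suc n) * dt)) j)
              \<le> err_const (vnorm N (b 0)) * dt ^ 3"
    using local_error_le[OF assms, of "real n * dt" dt] \<open>0 < dt\<close> by simp
qed

end
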